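(* Let $G$ be a compact Lie group with normalized Haar measure $dg$, and let $\sigma_1,\sigma_2,\alpha_1,\alpha_2,\rho$ be finite-dimensional unitary representations of $G$. Then the operator on $V_{\sigma_1}\otimes V_{\sigma_2}$ $$\Phi:=\int_{G\times G}\chi_{\alpha_1}(g)\,\chi_{\alpha_2}(h)\,\chi_{\rho}(g h^{-1})\,\sigma_1(g)\otimes\sigma_2(h)\,dg\,dh$$ is positive, i.e. $\langle v,\Phi v\rangle\geq0$ for all $v\in V_{\sigma_1}\otimes V_{\sigma_2}$.
   Context: $\chi_\rho(g)=\mathrm{tr}\,\rho(g)$ denotes the character of a finite-dimensional representation $\rho$. Representation spaces carry $G$-invariant scalar products making the representations unitary, and the tensor product carries the induced scalar product. An operator $A$ is positive if $\langle v,Av\rangle\ge 0$ for all $v$. *)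

theory Defs
  imports "HOL-Probability.Probability" "Jordan_Normal_Form.Schur_Decomposition"
begin

definition compact_group ::
  "'g topology \<Rightarrow> ('g \<Rightarrow> 'g \<Rightarrow> 'g) \<Rightarrow> ('g \<Rightarrow> 'g) \<Rightarrow> 'g \<Rightarrow> bool" where
  "compact_group T mul iv e \<longleftrightarrow>
     e \<in> topspace T \<and>
     (\<forall>x\<in>topspace T. \<forall>y\<in>topspace T. mul x y \<in> topspace T) \<and>
     (\<forall>x\<in>topspace T. iv x \<in> topspace T) \<and>
     (\<forall>x\<in>topspace T. \<forall>y\<in>topspace T. \<forall>z\<in>topspace T. mul (mul x y) z = mul x (mul y z)) \<and>
     (\<forall>x\<in>topspace T. mul e x = x \<and> mul x e = x) \<and>
     (\<forall>x\<in>topspace T. mul (iv x) x = e \<and> mul x (iv x) = e) \<and>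
     continuous_map (prod_topology T T) T (\<lambda>(x, y). mul x y) \<and>
     continuous_map T T iv \<and>
     compact_space T \<and> Hausdorff_space T"

definition normalized_haar ::
  "'g topology \<Rightarrow> ('g \<Rightarrow> 'g \<Rightarrow> 'g) \<Rightarrow> 'g measure \<Rightarrow> bool" where
  "normalized_haar T mul M \<longleftrightarrow>
     space M = topspace T \<and>
     sets M = sigma_sets (topspace T) {U. openin T U} \<and>
     prob_space M \<and>
     (\<forall>g\<in>topspace T. \<forall>A\<in>sets M. (mul g) ` A \<in> sets M \<and> measure M ((mul g) ` A) = measure M A) \<and>
     (\<forall>A\<in>sets M. measure M A = (INF U\<in>{U. openin T U \<and> A \<subseteq> U}. measure M U)) \<and>
     (\<forall>U. openin T U \<longrightarrow> measure M U = (SUP K\<in>{K. compactin T K \<and> K \<subseteq> U}. measure M K))"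

text \<open>A finite-dimensional (dimension d) continuous unitary representation,
  written in an orthonormal basis for the invariant scalar product.\<close>
definition unitary_rep ::
  "'g topology \<Rightarrow> ('g \<Rightarrow> 'g \<Rightarrow> 'g) \<Rightarrow> nat \<Rightarrow> ('g \<Rightarrow> complex mat) \<Rightarrow> bool" where
  "unitary_rep T mul d \<rho> \<longleftrightarrow>
     (\<forall>g\<in>topspace T. \<rho> g \<in> carrier_mat d d \<and> mat_adjoint (\<rho> g) * \<rho> g = 1\<^sub>m d) \<and>
     (\<forall>g\<in>topspace T. \<forall>h\<in>topspace T. \<rho> (mul g h) = \<rho> g * \<rho> h) \<and>
     (\<forall>i<d. \<forall>j<d. continuous_map T euclidean (\<lambda>g. \<rho> g $$ (i, j)))"

definition character :: "('g \<Rightarrow> complex mat) \<Rightarrow> 'g \<Rightarrow> complex" where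
  "character \<rho> g = (\<Sum>i<dim_row (\<rho> g). \<rho> g $$ (i, i))"

text \<open>Kronecker (tensor) product of an n x n and an m x m matrix; the basis
  vector e_a \<otimes> f_b has index a * m + b.\<close>
definition tensor_mat :: "nat \<Rightarrow> nat \<Rightarrow> complex mat \<Rightarrow> complex mat \<Rightarrow> complex mat" where
  "tensor_mat n m A B = mat (n * m) (n * m)
     (\<lambda>(i, j). A $$ (i div m, j div m) * B $$ (i mod m, j mod m))"

definition Phi_op ::
  "'g measure \<Rightarrow> ('g \<Rightarrow> 'g \<Rightarrow> 'g) \<Rightarrow> ('g \<Rightarrow> 'g) \<Rightarrow> nat \<Rightarrow> ('g \<Rightarrow> complex mat)
   \<Rightarrow> nat \<Rightarrow> ('g \<Rightarrow> complex mat) \<Rightarrow> ('g \<Rightarrow> complex mat) \<Rightarrow> ('g \<Rightarrow> complex mat)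
   \<Rightarrow> ('g \<Rightarrow> complex mat) \<Rightarrow> complex mat" where
  "Phi_op M mul iv d1 \<sigma>1 d2 \<sigma>2 \<alpha>1 \<alpha>2 \<rho> = mat (d1 * d2) (d1 * d2)
     (\<lambda>(i, j). integral\<^sup>L (M \<Otimes>\<^sub>M M)
        (\<lambda>(g, h). character \<alpha>1 g * character \<alpha>2 h * character \<rho> (mul g (iv h))
                   * tensor_mat d1 d2 (\<sigma>1 g) (\<sigma>2 h) $$ (i, j)))"

definition positive_op :: "nat \<Rightarrow> complex mat \<Rightarrow> bool" where
  "positive_op n A \<longleftrightarrow> (\<forall>v\<in>carrier_vec n.
     Im (conjugate v \<bullet> (A *\<^sub>v v)) = 0 \<and> 0 \<le> Re (conjugate v \<bullet> (A *\<^sub>v v)))"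

end

theory Submission
  imports Defs
begin

text \<open>
  Write \<chi>\<rho>(g h^-1) = \<Sum>k,l \<rho>(g)kl conj(\<rho>(h)kl) and expand the other two characters as
  traces. The integrand then becomes a partial trace of X(g) \<otimes> Y(h), where
  X = \<alpha>1 \<otimes> \<rho> \<otimes> \<sigma>1 and Y = \<alpha>2 \<otimes> conj \<rho> \<otimes> \<sigma>2 are again unitary representations.
  By Fubini, \<Phi> is the same partial trace of P \<otimes> Q, where P and Q are the Haar averages
  of X and Y. Left invariance of the Haar measure gives P* P = \<integral>\<integral> X(g^-1 h) dg dh = P, and
  likewise for Q. So P and Q are Gram matrices, and contracting their Gram factors shows
  that \<Phi> is a Gram matrix too, hence positive.
\<close>

lemma positive_op_gram:
  fixes W :: "'i \<Rightarrow> nat \<Rightarrow> complex"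
  assumes A: "A \<in> carrier_mat n n"
    and gram: "\<And>x y. x < n \<Longrightarrow> y < n \<Longrightarrow> A $$ (x, y) = (\<Sum>i\<in>I. cnj (W i x) * W i y)"
  shows "positive_op n A"
  unfolding positive_op_def
proof (intro ballI conjI)
  fix v :: "complex vec" assume v: "v \<in> carrier_vec n"
  define w where "w i = (\<Sum>x<n. W i x * v $ x)" for i
  have "conjugate v \<bullet> (A *\<^sub>v v) = (\<Sum>x<n. cnj (v $ x) * (\<Sum>y<n. A $$ (x, y) * v $ y))"
    using A v by (simp add: scalar_prod_def mult_mat_vec_def atLeast0LessThan)
  also have "\<dots> = (\<Sum>x<n. cnj (v $ x) * (\<Sum>y<n. (\<Sum>i\<in>I. cnj (W i x) * W i y) * v $ y))"
    by (simp add: gram)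
  also have "\<dots> = (\<Sum>i\<in>I. cnj (w i) * w i)"
    unfolding w_def cnj_sum complex_cnj_mult sum_distrib_left sum_distrib_right
    by (simp add: sum.swap[where B = I] mult_ac) (rule sum.cong[OF refl], rule sum.swap)
  also have "\<dots> = of_real (\<Sum>i\<in>I. (cmod (w i))\<^sup>2)"
    by (simp only: of_real_sum complex_norm_square mult.commute)
  finally have eq: "conjugate v \<bullet> (A *\<^sub>v v) = of_real (\<Sum>i\<in>I. (cmod (w i))\<^sup>2)" .
  show "Im (conjugate v \<bullet> (A *\<^sub>v v)) = 0" "0 \<le> Re (conjugate v \<bullet> (A *\<^sub>v v))"
    unfolding eq by (simp_all add: sum_nonneg)
qed

lemma sum_products_of_grams_eq_gram:
  "(\<Sum>a\<in>A. \<Sum>b\<in>B. \<Sum>k\<in>K. \<Sum>l\<in>K.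
      (\<Sum>r\<in>R. cnj (U r a k x) * U r a l y) * (\<Sum>s\<in>S. cnj (V s b k x) * V s b l y))
   = (\<Sum>(a, b, r, s)\<in>A \<times> B \<times> R \<times> S.
      cnj (\<Sum>k\<in>K. U r a k x * V s b k x) * (\<Sum>l\<in>K. U r a l y * V s b l y))"
  unfolding sum.cartesian_product[symmetric] split_beta fst_conv snd_conv
  unfolding cnj_sum complex_cnj_mult sum_product
  by (simp add: sum_distrib_left sum_distrib_right sum.swap[of _ K R] sum.swap[of _ K S] mult_ac)

lemma continuous_map_mult [continuous_intros]:
  fixes f g :: "'a \<Rightarrow> 'b::real_normed_algebra"
  assumes "continuous_map X euclidean f" and "continuous_map X euclidean g"
  shows "continuous_map X euclidean (\<lambda>x. f x * g x)"
  using assms by (simp add: continuous_map_atin tendsto_mult)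

lemma continuous_map_cnj [continuous_intros]:
  "continuous_map X euclidean f \<Longrightarrow> continuous_map X euclidean (\<lambda>x. cnj (f x))"
  by (simp add: continuous_map_atin tendsto_cnj)

lemma mat_adjoint_carrier: "A \<in> carrier_mat n n \<Longrightarrow> mat_adjoint A \<in> carrier_mat n n"
  unfolding mat_adjoint_def by auto

lemma mat_adjoint_index:
  "A \<in> carrier_mat n n \<Longrightarrow> i < n \<Longrightarrow> j < n \<Longrightarrow> mat_adjoint A $$ (i, j) = cnj (A $$ (j, i))"
  unfolding mat_adjoint_def by (simp add: mat_of_rows_index)

lemma less_mult_imp_div_mod_less:
  fixes x m n :: nat
  assumes "x < m * n"
  shows "x div n < m" and "x mod n < n"
proof -
  have "0 < n" using assms by (cases n) auto
  then show "x div n < m" and "x mod n < n"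
    using assms by (simp_all add: less_mult_imp_div_less mult.commute)
qed

definition rep_coeffs :: "('g \<Rightarrow> complex mat) \<Rightarrow> 'g \<Rightarrow> nat \<Rightarrow> nat \<Rightarrow> complex" where
  "rep_coeffs \<rho> g i j = \<rho> g $$ (i, j)"

definition coeff_tensor ::
  "('g \<Rightarrow> 'i \<Rightarrow> 'i \<Rightarrow> complex) \<Rightarrow> ('g \<Rightarrow> 'j \<Rightarrow> 'j \<Rightarrow> complex) \<Rightarrow> 'g \<Rightarrow> 'i \<times> 'j \<Rightarrow> 'i \<times> 'j \<Rightarrow> complex"
  where "coeff_tensor X Y g p q = X g (fst p) (fst q) * Y g (snd p) (snd q)"

locale compact_topological_group =
  fixes T :: "'g topology" and mul :: "'g \<Rightarrow> 'g \<Rightarrow> 'g" and iv :: "'g \<Rightarrow> 'g" and e :: 'g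
  assumes compact_group: "compact_group T mul iv e"
begin

lemma unit_closed: "e \<in> topspace T"
  using compact_group unfolding compact_group_def by auto

lemma mul_closed: "x \<in> topspace T \<Longrightarrow> y \<in> topspace T \<Longrightarrow> mul x y \<in> topspace T"
  using compact_group unfolding compact_group_def by auto

lemma inv_closed: "x \<in> topspace T \<Longrightarrow> iv x \<in> topspace T"
  using compact_group unfolding compact_group_def by auto

lemma mul_assoc:
  "x \<in> topspace T \<Longrightarrow> y \<in> topspace T \<Longrightarrow> z \<in> topspace T \<Longrightarrow> mul (mul x y) z = mul x (mul y z)"
  using compact_group unfolding compact_group_def by auto

lemma left_unit: "x \<in> topspace T \<Longrightarrow> mul e x = x"
  using compact_group unfolding compact_group_def by auto

lemma left_inverse: "x \<in> topspace T \<Longrightarrow> mul (iv x) x = e"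
  using compact_group unfolding compact_group_def by auto

lemma right_inverse: "x \<in> topspace T \<Longrightarrow> mul x (iv x) = e"
  using compact_group unfolding compact_group_def by auto

lemma compact_space: "compact_space T"
  using compact_group unfolding compact_group_def by auto

lemma continuous_map_bounded:
  fixes f :: "'g \<Rightarrow> 'b::real_normed_vector"
  assumes "continuous_map T euclidean f"
  shows "\<exists>B. \<forall>x\<in>topspace T. norm (f x) \<le> B"
proof -
  have "compactin euclidean (f ` topspace T)"
    using assms compact_space image_compactin compact_space_def by blast
  then have "bounded (f ` topspace T)"
    by (simp add: compactin_euclidean_iff compact_imp_bounded)
  then show ?thesis unfolding bounded_iff by auto
qed

context
  fixes d :: nat and \<rho> :: "'g \<Rightarrow> complex mat"
  assumes rep: "unitary_rep T mul d \<rho>"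
begin

lemma unitary_rep_carrier: "g \<in> topspace T \<Longrightarrow> \<rho> g \<in> carrier_mat d d"
  using rep unfolding unitary_rep_def by auto

lemma unitary_rep_unitary: "g \<in> topspace T \<Longrightarrow> mat_adjoint (\<rho> g) * \<rho> g = 1\<^sub>m d"
  using rep unfolding unitary_rep_def by auto

lemma unitary_rep_mul: "g \<in> topspace T \<Longrightarrow> h \<in> topspace T \<Longrightarrow> \<rho> (mul g h) = \<rho> g * \<rho> h"
  using rep unfolding unitary_rep_def by auto

lemma unitary_rep_continuous_index:
  "i < d \<Longrightarrow> j < d \<Longrightarrow> continuous_map T euclidean (\<lambda>g. \<rho> g $$ (i, j))"
  using rep unfolding unitary_rep_def by auto

lemma unitary_rep_unit: "\<rho> e = 1\<^sub>m d"
proof -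
  have A: "\<rho> e \<in> carrier_mat d d" and A': "mat_adjoint (\<rho> e) \<in> carrier_mat d d"
    using unitary_rep_carrier[OF unit_closed] mat_adjoint_carrier by blast+
  have idem: "\<rho> e * \<rho> e = \<rho> e"
    using unitary_rep_mul[OF unit_closed unit_closed] left_unit[OF unit_closed] by simp
  have "\<rho> e = (mat_adjoint (\<rho> e) * \<rho> e) * \<rho> e"
    using unitary_rep_unitary[OF unit_closed] A by simp
  also have "\<dots> = mat_adjoint (\<rho> e) * (\<rho> e * \<rho> e)"
    using assoc_mult_mat[OF A' A A] .
  also have "\<dots> = 1\<^sub>m d"
    using idem unitary_rep_unitary[OF unit_closed] by simp
  finally show ?thesis .
qed

lemma unitary_rep_inverse:
  assumes g: "g \<in> topspace T"
  shows "\<rho> (iv g) = mat_adjoint (\<rho> g)"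
proof -
  have A: "\<rho> g \<in> carrier_mat d d" and B: "\<rho> (iv g) \<in> carrier_mat d d"
    and A': "mat_adjoint (\<rho> g) \<in> carrier_mat d d"
    using unitary_rep_carrier g inv_closed mat_adjoint_carrier by blast+
  have "\<rho> g * \<rho> (iv g) = 1\<^sub>m d"
    using unitary_rep_mul[OF g inv_closed[OF g]] right_inverse[OF g] unitary_rep_unit by simp
  then have "mat_adjoint (\<rho> g) = mat_adjoint (\<rho> g) * (\<rho> g * \<rho> (iv g))"
    using A' by simp
  also have "\<dots> = (mat_adjoint (\<rho> g) * \<rho> g) * \<rho> (iv g)"
    using assoc_mult_mat[OF A' A B] by simp
  also have "\<dots> = \<rho> (iv g)"
    using unitary_rep_unitary[OF g] B by simp
  finally show ?thesis by simp
qed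

lemma unitary_rep_inverse_index:
  "g \<in> topspace T \<Longrightarrow> i < d \<Longrightarrow> j < d \<Longrightarrow> \<rho> (iv g) $$ (i, j) = cnj (\<rho> g $$ (j, i))"
  using unitary_rep_inverse unitary_rep_carrier mat_adjoint_index by metis

lemma unitary_rep_mul_index:
  "g \<in> topspace T \<Longrightarrow> h \<in> topspace T \<Longrightarrow> i < d \<Longrightarrow> j < d \<Longrightarrow>
   \<rho> (mul g h) $$ (i, j) = (\<Sum>k<d. \<rho> g $$ (i, k) * \<rho> h $$ (k, j))"
  using unitary_rep_mul unitary_rep_carrier[of g] unitary_rep_carrier[of h]
  by (simp add: scalar_prod_def atLeast0LessThan)

lemma character_unitary_rep: "g \<in> topspace T \<Longrightarrow> character \<rho> g = (\<Sum>i<d. \<rho> g $$ (i, i))"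
  unfolding character_def by (metis carrier_matD(1) unitary_rep_carrier)

lemma character_mul_inverse:
  assumes "g \<in> topspace T" and "h \<in> topspace T"
  shows "character \<rho> (mul g (iv h)) = (\<Sum>k<d. \<Sum>l<d. \<rho> g $$ (k, l) * cnj (\<rho> h $$ (k, l)))"
  using assms by (simp add: character_unitary_rep mul_closed inv_closed unitary_rep_mul_index
      unitary_rep_inverse_index)

end

text \<open>A unitary representation given by its matrix coefficients in an orthonormal basis
  indexed by an arbitrary set, so that tensor products (indexed by I \<times> J) and complex
  conjugates are again of this form.\<close>
definition unitary_coeff_rep :: "'i set \<Rightarrow> ('g \<Rightarrow> 'i \<Rightarrow> 'i \<Rightarrow> complex) \<Rightarrow> bool" where
  "unitary_coeff_rep I X \<longleftrightarrow>
     (\<forall>g\<in>topspace T. \<forall>h\<in>topspace T. \<forall>p\<in>I. \<forall>q\<in>I. X (mul g h) p q = (\<Sum>r\<in>I. X g p r * X h r q)) \<and>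
     (\<forall>g\<in>topspace T. \<forall>p\<in>I. \<forall>q\<in>I. X (iv g) p q = cnj (X g q p)) \<and>
     (\<forall>p\<in>I. \<forall>q\<in>I. continuous_map T euclidean (\<lambda>g. X g p q))"

lemma unitary_coeff_rep_of_unitary_rep:
  "unitary_rep T mul d \<rho> \<Longrightarrow> unitary_coeff_rep {..<d} (rep_coeffs \<rho>)"
  unfolding unitary_coeff_rep_def rep_coeffs_def
  using unitary_rep_mul_index unitary_rep_inverse_index unitary_rep_continuous_index by auto

lemma unitary_coeff_rep_cnj:
  assumes "unitary_coeff_rep I X"
  shows "unitary_coeff_rep I (\<lambda>g p q. cnj (X g p q))"
  using assms unfolding unitary_coeff_rep_def by (auto intro: continuous_map_cnj)

lemma unitary_coeff_rep_tensor:
  assumes X: "unitary_coeff_rep I X" and Y: "unitary_coeff_rep J Y"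
  shows "unitary_coeff_rep (I \<times> J) (coeff_tensor X Y)"
  unfolding unitary_coeff_rep_def
proof (intro conjI ballI)
  fix g h p q assume "g \<in> topspace T" "h \<in> topspace T" "p \<in> I \<times> J" "q \<in> I \<times> J"
  then have "coeff_tensor X Y (mul g h) p q
      = (\<Sum>r\<in>I. X g (fst p) r * X h r (fst q)) * (\<Sum>s\<in>J. Y g (snd p) s * Y h s (snd q))"
    using X Y unfolding unitary_coeff_rep_def coeff_tensor_def by auto
  also have "\<dots> = (\<Sum>(r, s)\<in>I \<times> J.
      (X g (fst p) r * Y g (snd p) s) * (X h r (fst q) * Y h s (snd q)))"
    by (simp add: sum_product sum.cartesian_product mult_ac)
  finally show "coeff_tensor X Y (mul g h) p q
      = (\<Sum>r\<in>I \<times> J. coeff_tensor X Y g p r * coeff_tensor X Y h r q)"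
    by (simp add: coeff_tensor_def split_def)
next
  fix g p q assume "g \<in> topspace T" "p \<in> I \<times> J" "q \<in> I \<times> J"
  then show "coeff_tensor X Y (iv g) p q = cnj (coeff_tensor X Y g q p)"
    using X Y unfolding unitary_coeff_rep_def coeff_tensor_def by auto
next
  fix p q assume "p \<in> I \<times> J" "q \<in> I \<times> J"
  then show "continuous_map T euclidean (\<lambda>g. coeff_tensor X Y g p q)"
    using X Y unfolding unitary_coeff_rep_def coeff_tensor_def by (auto intro: continuous_map_mult)
qed

end

locale haar_group = compact_topological_group T mul iv e
  for T :: "'g topology" and mul iv e +
  fixes M :: "'g measure"
  assumes normalized_haar: "normalized_haar T mul M"
begin

lemma space_eq: "space M = topspace T"
  using normalized_haar unfolding normalized_haar_def by auto

lemma sets_eq: "sets M = sigma_sets (topspace T) {U. openin T U}"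
  using normalized_haar unfolding normalized_haar_def by auto

sublocale prob_space M
  using normalized_haar unfolding normalized_haar_def by auto

lemma left_translation_invariant:
  "g \<in> topspace T \<Longrightarrow> A \<in> sets M \<Longrightarrow> mul g ` A \<in> sets M \<and> measure M (mul g ` A) = measure M A"
  using normalized_haar unfolding normalized_haar_def by auto

lemma vimage_left_translation:
  assumes g: "g \<in> topspace T" and A: "A \<in> sets M"
  shows "mul g -` A \<inter> space M = mul (iv g) ` A"
proof safe
  fix h assume h: "h \<in> space M" "mul g h \<in> A"
  then have "h = mul (iv g) (mul g h)"
    using g by (simp add: space_eq mul_assoc[symmetric] inv_closed left_inverse left_unit)
  then show "h \<in> mul (iv g) ` A" using h by blast
next
  fix a assume a: "a \<in> A"
  then have a_in: "a \<in> topspace T" using sets.sets_into_space[OF A] space_eq by auto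
  show "mul (iv g) a \<in> space M" using a_in g by (simp add: space_eq mul_closed inv_closed)
  have "mul g (mul (iv g) a) = mul (mul g (iv g)) a"
    using mul_assoc[OF g inv_closed[OF g] a_in] by simp
  then show "mul (iv g) a \<in> mul g -` A" using a a_in g by (simp add: right_inverse left_unit)
qed

lemma measurable_left_translation:
  assumes g: "g \<in> topspace T"
  shows "mul g \<in> measurable M M"
proof (rule measurableI)
  show "\<And>h. h \<in> space M \<Longrightarrow> mul g h \<in> space M"
    using g by (simp add: space_eq mul_closed)
  show "\<And>A. A \<in> sets M \<Longrightarrow> mul g -` A \<inter> space M \<in> sets M"
    using g by (simp add: vimage_left_translation left_translation_invariant inv_closed)
qed

lemma distr_left_translation:
  assumes g: "g \<in> topspace T"
  shows "distr M M (mul g) = M"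
proof (rule measure_eqI)
  fix A assume "A \<in> sets (distr M M (mul g))"
  then have A: "A \<in> sets M" by simp
  have "emeasure (distr M M (mul g)) A = emeasure M (mul (iv g) ` A)"
    using A g by (simp add: emeasure_distr measurable_left_translation vimage_left_translation)
  also have "\<dots> = emeasure M A"
    using left_translation_invariant[OF inv_closed[OF g] A] by (simp add: emeasure_eq_measure)
  finally show "emeasure (distr M M (mul g)) A = emeasure M A" .
qed simp

lemma integral_left_translation:
  fixes f :: "'g \<Rightarrow> complex"
  assumes "g \<in> topspace T" and "f \<in> borel_measurable M"
  shows "(\<integral>h. f (mul g h) \<partial>M) = integral\<^sup>L M f"
  using integral_distr[OF measurable_left_translation assms(2)] distr_left_translation assms(1)
  by simp

lemma continuous_map_borel_measurable:
  fixes f :: "'g \<Rightarrow> complex"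
  assumes "continuous_map T euclidean f"
  shows "f \<in> borel_measurable M"
proof (rule borel_measurableI)
  fix S :: "complex set" assume "open S"
  then have "openin T {x \<in> topspace T. f x \<in> S}"
    using assms by (simp add: openin_continuous_map_preimage)
  moreover have "f -` S \<inter> space M = {x \<in> topspace T. f x \<in> S}" using space_eq by auto
  ultimately show "f -` S \<inter> space M \<in> sets M" by (simp add: sets_eq sigma_sets.Basic)
qed

lemma continuous_map_integrable:
  fixes f :: "'g \<Rightarrow> complex"
  assumes "continuous_map T euclidean f"
  shows "integrable M f"
proof -
  obtain B where "\<forall>x\<in>topspace T. norm (f x) \<le> B"
    using continuous_map_bounded[OF assms] by blast
  then show ?thesis
    using continuous_map_borel_measurable[OF assms]
    by (intro integrable_const_bound[where B = B]) (auto simp: space_eq)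
qed

lemma integral_pair_product:
  fixes f g :: "'g \<Rightarrow> complex"
  assumes f: "continuous_map T euclidean f" and g: "continuous_map T euclidean g"
  shows "integrable (M \<Otimes>\<^sub>M M) (\<lambda>z. f (fst z) * g (snd z))"
    and "(\<integral>z. f (fst z) * g (snd z) \<partial>(M \<Otimes>\<^sub>M M)) = integral\<^sup>L M f * integral\<^sup>L M g"
proof -
  interpret pair_prob_space M M ..
  obtain A where A: "\<forall>x\<in>topspace T. norm (f x) \<le> A"
    using continuous_map_bounded[OF f] by blast
  obtain B where B: "\<forall>x\<in>topspace T. norm (g x) \<le> B"
    using continuous_map_bounded[OF g] by blast
  have "\<forall>z\<in>space (M \<Otimes>\<^sub>M M). norm (f (fst z) * g (snd z)) \<le> A * B"
    using A B by (auto simp: space_pair_measure space_eq norm_mult intro!: mult_mono)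
      (meson norm_ge_zero order_trans)
  moreover have "(\<lambda>z. f (fst z) * g (snd z)) \<in> borel_measurable (M \<Otimes>\<^sub>M M)"
    using continuous_map_borel_measurable[OF f] continuous_map_borel_measurable[OF g] by measurable
  ultimately show int: "integrable (M \<Otimes>\<^sub>M M) (\<lambda>z. f (fst z) * g (snd z))"
    by (intro P.integrable_const_bound[where B = "A * B"]) auto
  show "(\<integral>z. f (fst z) * g (snd z) \<partial>(M \<Otimes>\<^sub>M M)) = integral\<^sup>L M f * integral\<^sup>L M g"
    using integral_fst'[OF int] by simp
qed

lemma integral_unitary_coeff_rep_gram:
  assumes X: "unitary_coeff_rep I X" and p: "p \<in> I" and q: "q \<in> I"
  shows "(\<integral>g. X g p q \<partial>M) = (\<Sum>r\<in>I. cnj (\<integral>g. X g r p \<partial>M) * (\<integral>g. X g r q \<partial>M))"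
proof -
  have cont: "\<And>p q. p \<in> I \<Longrightarrow> q \<in> I \<Longrightarrow> continuous_map T euclidean (\<lambda>g. X g p q)"
    using X unfolding unitary_coeff_rep_def by blast
  note integrable = continuous_map_integrable[OF cont]
  have "(\<Sum>r\<in>I. cnj (\<integral>g. X g r p \<partial>M) * (\<integral>h. X h r q \<partial>M))
      = (\<integral>g. (\<Sum>r\<in>I. cnj (X g r p) * (\<integral>h. X h r q \<partial>M)) \<partial>M)"
    using integrable p by (simp add: integral_sum)
  also have "\<dots> = (\<integral>g. (\<integral>h. (\<Sum>r\<in>I. cnj (X g r p) * X h r q) \<partial>M) \<partial>M)"
    using integrable q by (simp add: integral_sum)
  also have "\<dots> = (\<integral>g. (\<integral>h. X (mul (iv g) h) p q \<partial>M) \<partial>M)"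
  proof (intro Bochner_Integration.integral_cong refl)
    fix g h assume "g \<in> space M" "h \<in> space M"
    then show "(\<Sum>r\<in>I. cnj (X g r p) * X h r q) = X (mul (iv g) h) p q"
      using X p q inv_closed unfolding unitary_coeff_rep_def space_eq by simp
  qed
  also have "\<dots> = (\<integral>g. (\<integral>h. X h p q \<partial>M) \<partial>M)"
    using continuous_map_borel_measurable[OF cont[OF p q]]
    by (intro Bochner_Integration.integral_cong refl integral_left_translation)
      (simp_all add: space_eq inv_closed)
  also have "\<dots> = (\<integral>h. X h p q \<partial>M)"
    by (simp add: prob_space)
  finally show ?thesis by simp
qed

context
  fixes d1 d2 da1 da2 dr :: nat and \<sigma>1 \<sigma>2 \<alpha>1 \<alpha>2 \<rho> :: "'g \<Rightarrow> complex mat"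
  assumes \<sigma>1: "unitary_rep T mul d1 \<sigma>1" and \<sigma>2: "unitary_rep T mul d2 \<sigma>2"
    and \<alpha>1: "unitary_rep T mul da1 \<alpha>1" and \<alpha>2: "unitary_rep T mul da2 \<alpha>2"
    and \<rho>: "unitary_rep T mul dr \<rho>"
begin

abbreviation X where
  "X \<equiv> coeff_tensor (coeff_tensor (rep_coeffs \<alpha>1) (rep_coeffs \<rho>)) (rep_coeffs \<sigma>1)"

abbreviation Y where
  "Y \<equiv> coeff_tensor
          (coeff_tensor (rep_coeffs \<alpha>2) (\<lambda>g i j. cnj (rep_coeffs \<rho> g i j))) (rep_coeffs \<sigma>2)"

lemma Phi_op_index:
  assumes x: "x < d1 * d2" and y: "y < d1 * d2"
  shows "Phi_op M mul iv d1 \<sigma>1 d2 \<sigma>2 \<alpha>1 \<alpha>2 \<rho> $$ (x, y) =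
    (\<Sum>a<da1. \<Sum>b<da2. \<Sum>k<dr. \<Sum>l<dr.
      (\<integral>g. X g ((a, k), x div d2) ((a, l), y div d2) \<partial>M) *
      (\<integral>h. Y h ((b, k), x mod d2) ((b, l), y mod d2) \<partial>M))"
proof -
  note x1 = less_mult_imp_div_mod_less(1)[OF x] less_mult_imp_div_mod_less(1)[OF y]
  note x2 = less_mult_imp_div_mod_less(2)[OF x] less_mult_imp_div_mod_less(2)[OF y]
  have "Phi_op M mul iv d1 \<sigma>1 d2 \<sigma>2 \<alpha>1 \<alpha>2 \<rho> $$ (x, y) = integral\<^sup>L (M \<Otimes>\<^sub>M M)
      (\<lambda>(g, h). character \<alpha>1 g * character \<alpha>2 h * character \<rho> (mul g (iv h))
                 * (\<sigma>1 g $$ (x div d2, y div d2) * \<sigma>2 h $$ (x mod d2, y mod d2)))"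
    using x y by (simp add: Phi_op_def tensor_mat_def)
  also have "\<dots> = (\<integral>z. (\<Sum>a<da1. \<Sum>b<da2. \<Sum>k<dr. \<Sum>l<dr.
        X (fst z) ((a, k), x div d2) ((a, l), y div d2)
        * Y (snd z) ((b, k), x mod d2) ((b, l), y mod d2)) \<partial>(M \<Otimes>\<^sub>M M))"
  proof (rule Bochner_Integration.integral_cong[OF refl])
    fix z assume "z \<in> space (M \<Otimes>\<^sub>M M)"
    then obtain g h where z: "z = (g, h)" and g: "g \<in> topspace T" and h: "h \<in> topspace T"
      by (auto simp: space_pair_measure space_eq)
    show "(case z of (g, h) \<Rightarrow> character \<alpha>1 g * character \<alpha>2 h * character \<rho> (mul g (iv h))
          * (\<sigma>1 g $$ (x div d2, y div d2) * \<sigma>2 h $$ (x mod d2, y mod d2))) =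
        (\<Sum>a<da1. \<Sum>b<da2. \<Sum>k<dr. \<Sum>l<dr.
          X (fst z) ((a, k), x div d2) ((a, l), y div d2)
          * Y (snd z) ((b, k), x mod d2) ((b, l), y mod d2))"
      using g h unfolding z coeff_tensor_def rep_coeffs_def
      by (simp add: character_unitary_rep[OF \<alpha>1] character_unitary_rep[OF \<alpha>2]
          character_mul_inverse[OF \<rho>] sum_distrib_left sum_distrib_right mult_ac
          sum.swap[of _ "{..<da2}" "{..<dr}"])
  qed
  also have "\<dots> = (\<Sum>a<da1. \<Sum>b<da2. \<Sum>k<dr. \<Sum>l<dr.
      (\<integral>g. X g ((a, k), x div d2) ((a, l), y div d2) \<partial>M) *
      (\<integral>h. Y h ((b, k), x mod d2) ((b, l), y mod d2) \<partial>M))"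
  proof -
    have cont: "continuous_map T euclidean (\<lambda>g. X g ((a, k), x div d2) ((a, l), y div d2))"
      "continuous_map T euclidean (\<lambda>h. Y h ((b, k), x mod d2) ((b, l), y mod d2))"
      if "a < da1" "b < da2" "k < dr" "l < dr" for a b k l
      using that x1 x2 unfolding coeff_tensor_def rep_coeffs_def
      by (auto intro!: continuous_intros unitary_rep_continuous_index[OF \<sigma>1]
          unitary_rep_continuous_index[OF \<sigma>2] unitary_rep_continuous_index[OF \<alpha>1]
          unitary_rep_continuous_index[OF \<alpha>2] unitary_rep_continuous_index[OF \<rho>])
    have "integrable (M \<Otimes>\<^sub>M M) (\<lambda>z. X (fst z) ((a, k), x div d2) ((a, l), y div d2)
                                      * Y (snd z) ((b, k), x mod d2) ((b, l), y mod d2))"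
      "(\<integral>z. X (fst z) ((a, k), x div d2) ((a, l), y div d2)
             * Y (snd z) ((b, k), x mod d2) ((b, l), y mod d2) \<partial>(M \<Otimes>\<^sub>M M))
        = (\<integral>g. X g ((a, k), x div d2) ((a, l), y div d2) \<partial>M)
          * (\<integral>h. Y h ((b, k), x mod d2) ((b, l), y mod d2) \<partial>M)"
      if "a < da1" "b < da2" "k < dr" "l < dr" for a b k l
      using integral_pair_product[OF cont[OF that]] by blast+
    then show ?thesis
      by (subst Bochner_Integration.integral_sum;
          (intro Bochner_Integration.integrable_sum sum.cong refl)?; simp)+
  qed
  finally show ?thesis .
qed

lemma Phi_op_gram:
  assumes x: "x < d1 * d2" and y: "y < d1 * d2"
  defines "I \<equiv> ({..<da1} \<times> {..<dr}) \<times> {..<d1}" and "J \<equiv> ({..<da2} \<times> {..<dr}) \<times> {..<d2}"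
    and "W \<equiv> \<lambda>(a, b, r, s) x.
           \<Sum>k<dr. (\<integral>g. X g r ((a, k), x div d2) \<partial>M) * (\<integral>h. Y h s ((b, k), x mod d2) \<partial>M)"
  shows "Phi_op M mul iv d1 \<sigma>1 d2 \<sigma>2 \<alpha>1 \<alpha>2 \<rho> $$ (x, y)
    = (\<Sum>i\<in>{..<da1} \<times> {..<da2} \<times> I \<times> J. cnj (W i x) * W i y)"
proof -
  note x1 = less_mult_imp_div_mod_less(1)[OF x] less_mult_imp_div_mod_less(1)[OF y]
  note x2 = less_mult_imp_div_mod_less(2)[OF x] less_mult_imp_div_mod_less(2)[OF y]
  have "unitary_coeff_rep I X"
    unfolding I_def
    by (intro unitary_coeff_rep_tensor unitary_coeff_rep_of_unitary_rep \<alpha>1 \<rho> \<sigma>1)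
  note gram_X = integral_unitary_coeff_rep_gram[OF this]
  have "unitary_coeff_rep J Y"
    unfolding J_def
    by (intro unitary_coeff_rep_tensor unitary_coeff_rep_cnj unitary_coeff_rep_of_unitary_rep
        \<alpha>2 \<rho> \<sigma>2)
  note gram_Y = integral_unitary_coeff_rep_gram[OF this]
  have "Phi_op M mul iv d1 \<sigma>1 d2 \<sigma>2 \<alpha>1 \<alpha>2 \<rho> $$ (x, y) =
    (\<Sum>a<da1. \<Sum>b<da2. \<Sum>k<dr. \<Sum>l<dr.
      (\<integral>g. X g ((a, k), x div d2) ((a, l), y div d2) \<partial>M) *
      (\<integral>h. Y h ((b, k), x mod d2) ((b, l), y mod d2) \<partial>M))"
    by (rule Phi_op_index[OF x y])
  also have "\<dots> = (\<Sum>a<da1. \<Sum>b<da2. \<Sum>k<dr. \<Sum>l<dr.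
      (\<Sum>r\<in>I. cnj (\<integral>g. X g r ((a, k), x div d2) \<partial>M) * (\<integral>g. X g r ((a, l), y div d2) \<partial>M)) *
      (\<Sum>s\<in>J. cnj (\<integral>h. Y h s ((b, k), x mod d2) \<partial>M) * (\<integral>h. Y h s ((b, l), y mod d2) \<partial>M)))"
    using x1 x2 by (intro sum.cong refl arg_cong2[where f = "(*)"] gram_X gram_Y)
      (auto simp: I_def J_def)
  also have "\<dots> = (\<Sum>(a, b, r, s)\<in>{..<da1} \<times> {..<da2} \<times> I \<times> J.
      cnj (\<Sum>k<dr. (\<integral>g. X g r ((a, k), x div d2) \<partial>M) * (\<integral>h. Y h s ((b, k), x mod d2) \<partial>M)) *
      (\<Sum>l<dr. (\<integral>g. X g r ((a, l), y div d2) \<partial>M) * (\<integral>h. Y h s ((b, l), y mod d2) \<partial>M)))"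
    by (rule sum_products_of_grams_eq_gram)
  also have "\<dots> = (\<Sum>i\<in>{..<da1} \<times> {..<da2} \<times> I \<times> J. cnj (W i x) * W i y)"
    unfolding W_def by (rule sum.cong) auto
  finally show ?thesis .
qed

end

end

theorem lemma1:
  fixes T :: "'g topology" and mul :: "'g \<Rightarrow> 'g \<Rightarrow> 'g" and iv :: "'g \<Rightarrow> 'g" and e :: 'g
    and M :: "'g measure"
    and \<sigma>1 \<sigma>2 \<alpha>1 \<alpha>2 \<rho> :: "'g \<Rightarrow> complex mat"
    and d1 d2 da1 da2 dr :: nat
  assumes "compact_group T mul iv e"
    and "normalized_haar T mul M"
    and "unitary_rep T mul d1 \<sigma>1"
    and "unitary_rep T mul d2 \<sigma>2"
    and "unitary_rep T mul da1 \<alpha>1"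
    and "unitary_rep T mul da2 \<alpha>2"
    and "unitary_rep T mul dr \<rho>"
  shows "positive_op (d1 * d2) (Phi_op M mul iv d1 \<sigma>1 d2 \<sigma>2 \<alpha>1 \<alpha>2 \<rho>)"
proof -
  interpret haar_group T mul iv e M
    using assms(1,2)
    by (intro haar_group.intro compact_topological_group.intro haar_group_axioms.intro)
  show ?thesis
    by (rule positive_op_gram[OF _ Phi_op_gram[OF assms(3-7)]]) (simp add: Phi_op_def)
qed

end
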